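(* Let $F$ be an algebraically closed field of characteristic zero, $A(x)$ a nonsingular $n\times n$ matrix over $F[x]$, and $P(x),Q(x)$ invertible matrices over $F[x]$ with $P(x)A(x)Q(x)=\Phi(x)=\mathrm{diag}(\varphi_1(x),\dots,\varphi_n(x))$, the Smith form of $A(x)$ with monic diagonal entries. Let $s\ge1$ be an integer. Then there exists an invertible $U(x)$ over $F[x]$ with $A(x)U(x)=Ix^s-D_{s-1}x^{s-1}-\dots-D_0$ for some $D_i\in M_n(F)$ if and only if (1) $\deg\det A(x)=ns$ and (2) $\det M_{P(x)\,\|I\ \ Ix\ \ \cdots\ \ Ix^{s-1}\|}(\Phi)\neq0$, where $\|I\ Ix\ \cdots\ Ix^{s-1}\|$ is the $n\times ns$ block row matrix.
   Context: For a $1\times m$ row $g(x)$ over $F[x]$ and a monic $\varphi(x)=\prod_{j=1}^r(x-\alpha_j)^{k_j}$ with distinct $\alpha_j\in F$, $M_{g}(\varphi)$ is the $(\deg\varphi)\times m$ matrix over $F$ obtained by stacking, for $j=1,\dots,r$, the rows $g(\alpha_j),g'(\alpha_j),\dots,g^{(k_j-1)}(\alpha_j)$ (entrywise derivatives); it is empty if $\deg\varphi=0$. For an $n\times m$ matrix $G(x)$ with rows $g_1(x),\dots,g_n(x)$ and $\Phi=\mathrm{diag}(\varphi_1,\dots,\varphi_n)$ with monic $\varphi_i$, $M_{G}(\Phi)$ is the matrix obtained by stacking $M_{g_1}(\varphi_1),\dots,M_{g_n}(\varphi_n)$; it has $\deg\det\Phi$ rows (the ordering of roots affects it only by a row permutation).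 The Smith form of $A(x)$ is a diagonal matrix $\mathrm{diag}(\varphi_1,\dots,\varphi_n)$, $\varphi_i\mid\varphi_{i+1}$, equivalent to $A(x)$. *)

theory Defs
  imports "HOL-Computational_Algebra.Polynomial" "Jordan_Normal_Form.Determinant"
begin

text \<open>A fixed enumeration (without repetition) of the distinct roots of a polynomial.
  The choice of ordering only permutes rows of the resulting matrix.\<close>
definition root_list :: "'a::field poly \<Rightarrow> 'a list" where
  "root_list p = (SOME xs. distinct xs \<and> set xs = {a. poly p a = 0})"

text \<open>Rows of M_g(phi): for each distinct root alpha of phi (with multiplicity k = order alpha phi),
  the rows g(alpha), g'(alpha), ..., g^(k-1)(alpha) (entrywise derivatives).
  The row g is given as a 1 x m matrix, i.e. as a vector of length m.\<close>
definition M_rows :: "'a::field poly vec \<Rightarrow> 'a poly \<Rightarrow> 'a vec list" where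
  "M_rows g \<phi> = concat (map (\<lambda>\<alpha>. map (\<lambda>k. vec (dim_vec g) (\<lambda>c. poly ((pderiv ^^ k) (g $ c)) \<alpha>))
                                    [0..<order \<alpha> \<phi>]) (root_list \<phi>))"

text \<open>M_G(Phi) for an n x m matrix G and Phi = diag(phi 0, ..., phi (n-1)):
  stack M_{g_1}(phi_1), ..., M_{g_n}(phi_n).\<close>
definition M_mat :: "'a::field poly mat \<Rightarrow> (nat \<Rightarrow> 'a poly) \<Rightarrow> 'a mat" where
  "M_mat G \<phi> = mat_of_rows (dim_col G) (concat (map (\<lambda>i. M_rows (row G i) (\<phi> i)) [0..<dim_row G]))"

definition diag_poly_mat :: "nat \<Rightarrow> (nat \<Rightarrow> 'a::zero) \<Rightarrow> 'a mat" where
  "diag_poly_mat n \<phi> = mat n n (\<lambda>(i,j). if i = j then \<phi> i else 0)"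

definition block_row_powers :: "nat \<Rightarrow> nat \<Rightarrow> 'a::comm_ring_1 poly mat" where
  "block_row_powers n s = mat n (n * s) (\<lambda>(i,j). if j mod n = i then monom 1 (j div n) else 0)"

definition monic_mat_poly :: "nat \<Rightarrow> nat \<Rightarrow> (nat \<Rightarrow> 'a::comm_ring_1 mat) \<Rightarrow> 'a poly mat" where
  "monic_mat_poly n s D = mat n n (\<lambda>(i,j). (if i = j then monom 1 s else 0) - (\<Sum>k<s. monom (D k $$ (i,j)) k))"

end

theory Submission
  imports Defs
begin

text \<open>
  A vector v lies in the column module A F[x]^n iff phi_i
  divides (P v)_i for every i. Over an algebraically closed field of characteristic zero this
  means that all Hermite data of P v vanish: the values at each root alpha of phi_i of the
  derivatives of (P v)_i of order below the multiplicity of alpha. There are deg det A such data,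
  and the matrix M of condition (2) sends c in F^(ns) to the Hermite data of P (B c), where B c is
  the polynomial vector of degree < s whose coefficients, block by block, are the entries of c.

  If A U = L is monic of degree s, then deg det A = ns and A and L have the same column module,
  which contains no nonzero vector of degree < s; so M is injective, hence invertible.
  Conversely, if M is invertible, every v is congruent to some B c modulo A F[x]^n. Taking
  v = x^s e_i yields A U = I x^s - D(x) column by column, and comparing degrees of determinants
  shows that det U is a nonzero constant.
\<close>

lemma proots_alg_closed_factorization:
  fixes p :: "'a::alg_closed_field poly"
  assumes "p \<noteq> 0"
  shows "p = smult (lead_coeff p) (\<Prod>x\<in>#proots p. [:-x, 1:])"
    and "size (proots p) = degree p"
proof -
  obtain A where A: "size A = degree p" "p = smult (lead_coeff p) (\<Prod>x\<in>#A. [:-x, 1:])"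
    using alg_closed_imp_factorization[OF assms] by blast
  have "lead_coeff p \<noteq> 0"
    using assms by simp
  then have "proots p = proots (\<Prod>x\<in>#A. [:-x, 1:])"
    by (subst A(2)) simp
  also have "\<dots> = A"
  proof (induction A)
    case (add x A)
    have "(\<Prod>x\<in>#A. [:-x, 1:]) \<noteq> 0"
      by (auto simp: prod_mset_zero_iff)
    with add show ?case
      by (simp add: proots_mult del: mult_pCons_left)
  qed simp
  finally show "p = smult (lead_coeff p) (\<Prod>x\<in>#proots p. [:-x, 1:])" "size (proots p) = degree p"
    using A by simp_all
qed

lemma size_proots_alg_closed: "size (proots (p :: 'a::alg_closed_field poly)) = degree p"
  by (cases "p = 0") (simp_all add: proots_alg_closed_factorization)

lemma alg_closed_dvd_iff_order_le:
  fixes p q :: "'a::alg_closed_field poly"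
  assumes "p \<noteq> 0" "q \<noteq> 0"
  shows "p dvd q \<longleftrightarrow> (\<forall>\<alpha>. order \<alpha> p \<le> order \<alpha> q)"
proof
  assume "\<forall>\<alpha>. order \<alpha> p \<le> order \<alpha> q"
  then have "proots p \<subseteq># proots q"
    using assms by (simp add: subseteq_mset_def)
  then have "(\<Prod>x\<in>#proots p. [:-x, 1:]) dvd (\<Prod>x\<in>#proots q. [:-x, 1:])"
    by (intro prod_mset_subset_imp_dvd image_mset_subseteq_mono)
  then show "p dvd q"
    using assms by (subst (1 2) proots_alg_closed_factorization(1))
      (simp_all add: smult_dvd_iff dvd_smult_iff)
qed (use assms dvd_imp_order_le in blast)

lemma order_ge_iff_higher_pderiv_vanish:
  fixes p :: "'a::field_char_0 poly"
  assumes "p \<noteq> 0"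
  shows "m \<le> order \<alpha> p \<longleftrightarrow> (\<forall>k<m. poly ((pderiv ^^ k) p) \<alpha> = 0)"
  using assms
proof (induction m arbitrary: p)
  case (Suc m)
  have shift: "(\<forall>k<Suc m. poly ((pderiv ^^ k) p) \<alpha> = 0) \<longleftrightarrow>
      poly p \<alpha> = 0 \<and> (\<forall>k<m. poly ((pderiv ^^ k) (pderiv p)) \<alpha> = 0)"
    by (auto simp: less_Suc_eq_0_disj funpow_Suc_right simp del: funpow.simps)
  show ?case
  proof (cases "poly p \<alpha> = 0")
    case True
    have "pderiv p \<noteq> 0"
      using True Suc.prems pderiv_iszero by force
    then show ?thesis
      using shift True Suc.IH order_pderiv[OF Suc.prems True] by simp
  qed (simp add: shift order_0I)
qed simp

lemma higher_pderiv_diff: "(pderiv ^^ k) (p - q) = (pderiv ^^ k) p - (pderiv ^^ k) (q :: 'a::idom poly)"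
  by (induction k) (simp_all add: pderiv_diff)

lemma dvd_iff_higher_pderiv_vanish:
  fixes \<phi> p :: "'a::{alg_closed_field, field_char_0} poly"
  assumes "\<phi> \<noteq> 0"
  shows "\<phi> dvd p \<longleftrightarrow> (\<forall>\<alpha> k. k < order \<alpha> \<phi> \<longrightarrow> poly ((pderiv ^^ k) p) \<alpha> = 0)"
proof (cases "p = 0")
  case False
  then show ?thesis
    using assms by (auto simp: alg_closed_dvd_iff_order_le order_ge_iff_higher_pderiv_vanish)
qed simp

lemma invertible_matE:
  assumes "A \<in> carrier_mat n n" "invertible_mat A"
  obtains B where "B \<in> carrier_mat n n" "A * B = 1\<^sub>m n" "B * A = 1\<^sub>m n"
proof -
  from assms(2) obtain B where AB: "A * B = 1\<^sub>m (dim_row A)" "B * A = 1\<^sub>m (dim_row B)"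
    unfolding invertible_mat_def inverts_mat_def by blast
  have "B \<in> carrier_mat n n"
    using arg_cong[OF AB(1), of dim_col] arg_cong[OF AB(2), of dim_col] assms(1) by auto
  with AB assms(1) show ?thesis
    using that by auto
qed

lemma invertible_mat_iff_det_dvd_one:
  fixes A :: "'a::comm_ring_1 mat"
  assumes A: "A \<in> carrier_mat n n"
  shows "invertible_mat A \<longleftrightarrow> det A dvd 1"
proof
  assume "invertible_mat A"
  then obtain B where "B \<in> carrier_mat n n" "A * B = 1\<^sub>m n"
    using invertible_matE[OF A] by blast
  then have "1 = det A * det B"
    using A by (metis det_mult det_one)
  then show "det A dvd 1" ..
next
  assume "det A dvd 1"
  then obtain e where e: "1 = det A * e" ..
  define B where "B = e \<cdot>\<^sub>m adj_mat A"
  have B: "B \<in> carrier_mat n n"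
    using adj_mat(1)[OF A] by (simp add: B_def)
  have "A * B = 1\<^sub>m n" "B * A = 1\<^sub>m n"
    unfolding B_def mult_smult_distrib[OF A adj_mat(1)[OF A]] mult_smult_assoc_mat[OF adj_mat(1)[OF A] A]
      adj_mat(2,3)[OF A] using e by (auto intro!: eq_matI simp: mult.commute)
  then show "invertible_mat A"
    using A B unfolding invertible_mat_def inverts_mat_def by auto
qed

lemma invertible_poly_mat_iff_det:
  fixes A :: "'a::field poly mat"
  assumes "A \<in> carrier_mat n n"
  shows "invertible_mat A \<longleftrightarrow> det A \<noteq> 0 \<and> degree (det A) = 0"
  using assms invertible_mat_iff_det_dvd_one is_unit_iff_degree not_is_unit_0 by metis

lemma diag_poly_mat_mult_vec:
  assumes "w \<in> carrier_vec n" "i < n"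
  shows "(diag_poly_mat n \<phi> *\<^sub>v w) $ i = \<phi> i * w $ i"
proof -
  have "(diag_poly_mat n \<phi> *\<^sub>v w) $ i = (\<Sum>j\<in>{0..<n}. (if i = j then \<phi> i else 0) * w $ j)"
    using assms by (simp add: diag_poly_mat_def scalar_prod_def)
  also have "\<dots> = \<phi> i * w $ i"
    using assms by (simp add: if_distrib[of "\<lambda>x. x * _"] cong: if_cong)
  finally show ?thesis .
qed

lemma det_diag_poly_mat: "det (diag_poly_mat n \<phi>) = (\<Prod>i<n. \<phi> i)"
proof -
  have "det (diag_poly_mat n \<phi>) = prod_list (diag_mat (diag_poly_mat n \<phi>))"
    by (rule det_upper_triangular) (auto simp: upper_triangular_def diag_poly_mat_def)
  also have "\<dots> = (\<Prod>i<n. \<phi> i)"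
    by (simp add: diag_mat_def diag_poly_mat_def prod.distinct_set_conv_list[symmetric] atLeast0LessThan)
  finally show ?thesis .
qed

lemma range_diag_poly_mat_iff:
  fixes \<phi> :: "nat \<Rightarrow> 'a::comm_ring_1"
  assumes y: "y \<in> carrier_vec n"
  shows "(\<exists>w\<in>carrier_vec n. y = diag_poly_mat n \<phi> *\<^sub>v w) \<longleftrightarrow> (\<forall>i<n. \<phi> i dvd y $ i)"
proof
  assume "\<forall>i<n. \<phi> i dvd y $ i"
  then have "\<forall>i\<in>{..<n}. \<exists>k. y $ i = \<phi> i * k"
    by (auto elim!: dvdE)
  then obtain f where f: "\<forall>i\<in>{..<n}. y $ i = \<phi> i * f i"
    by (rule bchoice[THEN exE])
  have "y = diag_poly_mat n \<phi> *\<^sub>v vec n f"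
  proof (rule eq_vecI)
    fix i
    assume "i < dim_vec (diag_poly_mat n \<phi> *\<^sub>v vec n f)"
    then have i: "i < n"
      by (simp add: diag_poly_mat_def)
    show "y $ i = (diag_poly_mat n \<phi> *\<^sub>v vec n f) $ i"
      using f diag_poly_mat_mult_vec[of "vec n f" n i] i by simp
  qed (use y in \<open>simp add: diag_poly_mat_def\<close>)
  then show "\<exists>w\<in>carrier_vec n. y = diag_poly_mat n \<phi> *\<^sub>v w"
    by (intro bexI[of _ "vec n f"]) simp_all
next
  assume "\<exists>w\<in>carrier_vec n. y = diag_poly_mat n \<phi> *\<^sub>v w"
  then obtain w where "w \<in> carrier_vec n" "y = diag_poly_mat n \<phi> *\<^sub>v w" ..
  then show "\<forall>i<n. \<phi> i dvd y $ i"
    by (simp add: diag_poly_mat_mult_vec)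
qed

lemma range_mult_vec_equivalent_iff:
  fixes A P Q :: "'a::comm_ring_1 mat"
  assumes A: "A \<in> carrier_mat n n"
    and P: "P \<in> carrier_mat n n" "invertible_mat P"
    and Q: "Q \<in> carrier_mat n n" "invertible_mat Q"
    and v: "v \<in> carrier_vec n"
  shows "(\<exists>u\<in>carrier_vec n. v = A *\<^sub>v u) \<longleftrightarrow> (\<exists>w\<in>carrier_vec n. P *\<^sub>v v = (P * A * Q) *\<^sub>v w)"
proof
  assume "\<exists>u\<in>carrier_vec n. v = A *\<^sub>v u"
  then obtain u where u: "u \<in> carrier_vec n" "v = A *\<^sub>v u" ..
  obtain Q' where Q': "Q' \<in> carrier_mat n n" "Q * Q' = 1\<^sub>m n"
    using invertible_matE[OF Q] by blast
  have PA: "P * A \<in> carrier_mat n n"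
    using P A by simp
  have "(P * A * Q) *\<^sub>v (Q' *\<^sub>v u) = (P * A) *\<^sub>v ((Q * Q') *\<^sub>v u)"
    using PA Q(1) Q'(1) u(1) by simp
  also have "\<dots> = P *\<^sub>v v"
    using P A Q' u by simp
  finally show "\<exists>w\<in>carrier_vec n. P *\<^sub>v v = (P * A * Q) *\<^sub>v w"
    using Q'(1) u(1) by (intro bexI[of _ "Q' *\<^sub>v u"]) simp_all
next
  assume "\<exists>w\<in>carrier_vec n. P *\<^sub>v v = (P * A * Q) *\<^sub>v w"
  then obtain w where w: "w \<in> carrier_vec n" "P *\<^sub>v v = (P * A * Q) *\<^sub>v w" ..
  obtain P' where P': "P' \<in> carrier_mat n n" "P' * P = 1\<^sub>m n"
    using invertible_matE[OF P] by blast
  have "P *\<^sub>v v = P *\<^sub>v (A *\<^sub>v (Q *\<^sub>v w))"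
    using w assoc_mult_mat_vec[of "P * A" n n Q n w] P(1) A Q(1) by simp
  then have "P' *\<^sub>v (P *\<^sub>v v) = P' *\<^sub>v (P *\<^sub>v (A *\<^sub>v (Q *\<^sub>v w)))"
    by simp
  then show "\<exists>u\<in>carrier_vec n. v = A *\<^sub>v u"
    using P'(1) P(1) A Q(1) v w(1) assoc_mult_mat_vec[of P' n n P n] P'(2)
    by (intro bexI[of _ "Q *\<^sub>v w"]) simp_all
qed

definition poly_vec_of_blocks :: "nat \<Rightarrow> nat \<Rightarrow> 'a::comm_ring_1 vec \<Rightarrow> 'a poly vec" where
  "poly_vec_of_blocks n s c = vec n (\<lambda>r. \<Sum>k<s. monom (c $ (k * n + r)) k)"

lemma block_index_less:
  fixes k r :: nat
  assumes "k < s" "r < n"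
  shows "k * n + r < n * s"
proof -
  have "k * n + r < (k + 1) * n"
    using assms by simp
  also have "\<dots> \<le> s * n"
    using assms by (intro mult_right_mono) auto
  finally show ?thesis
    by (simp add: mult.commute)
qed

lemma block_row_powers_mult_vec:
  assumes c: "c \<in> carrier_vec (n * s)"
  shows "block_row_powers n s *\<^sub>v map_vec (\<lambda>a. [:a:]) c = poly_vec_of_blocks n s c"
proof (rule eq_vecI)
  fix r
  assume "r < dim_vec (poly_vec_of_blocks n s c)"
  then have r: "r < n"
    by (simp add: poly_vec_of_blocks_def)
  have block: "{j \<in> {0..<n * s}. j mod n = r} = (\<lambda>k. k * n + r) ` {..<s}"
  proof (intro equalityI subsetI)
    fix j
    assume "j \<in> {j \<in> {0..<n * s}. j mod n = r}"
    then have "j = j div n * n + r" "j div n < s"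
      by (auto simp: less_mult_imp_div_less mult.commute)
    then show "j \<in> (\<lambda>k. k * n + r) ` {..<s}"
      by blast
  next
    fix j
    assume "j \<in> (\<lambda>k. k * n + r) ` {..<s}"
    then obtain k where k: "k < s" "j = k * n + r"
      by auto
    then show "j \<in> {j \<in> {0..<n * s}. j mod n = r}"
      using block_index_less[OF k(1) r] r by simp
  qed
  have "(block_row_powers n s *\<^sub>v map_vec (\<lambda>a. [:a:]) c) $ r
      = (\<Sum>j\<in>{0..<n * s}. if j mod n = r then monom (c $ j) (j div n) else 0)"
    using r c by (auto simp: block_row_powers_def scalar_prod_def smult_monom intro!: sum.cong)
  also have "\<dots> = (\<Sum>j\<in>{j \<in> {0..<n * s}. j mod n = r}. monom (c $ j) (j div n))"
    by (simp add: sum.inter_filter[symmetric])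
  also note block
  also have "(\<Sum>j\<in>(\<lambda>k. k * n + r) ` {..<s}. monom (c $ j) (j div n)) = (\<Sum>k<s. monom (c $ (k * n + r)) k)"
    using r by (subst sum.reindex) (auto simp: inj_on_def)
  finally show "(block_row_powers n s *\<^sub>v map_vec (\<lambda>a. [:a:]) c) $ r = poly_vec_of_blocks n s c $ r"
    using r by (simp add: poly_vec_of_blocks_def)
qed (simp add: block_row_powers_def poly_vec_of_blocks_def)

lemma coeff_poly_vec_of_blocks:
  assumes "j < n * s"
  shows "coeff (poly_vec_of_blocks n s c $ (j mod n)) (j div n) = c $ j"
proof -
  have "n > 0" "j div n < s"
    using assms by (auto simp: less_mult_imp_div_less mult.commute intro: Nat.gr0I)
  then show ?thesis
    by (simp add: poly_vec_of_blocks_def coeff_sum coeff_monom)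
qed

lemma degree_poly_vec_of_blocks:
  assumes "s \<ge> 1" "r < n"
  shows "degree (poly_vec_of_blocks n s c $ r) < s"
  using assms unfolding poly_vec_of_blocks_def
  by (simp, intro degree_sum_less) (simp_all add: order.strict_trans1[OF degree_monom_le])

lemma poly_vec_of_blocks_eq_0_iff:
  assumes "c \<in> carrier_vec (n * s)"
  shows "poly_vec_of_blocks n s c = 0\<^sub>v n \<longleftrightarrow> c = 0\<^sub>v (n * s)"
proof
  assume "poly_vec_of_blocks n s c = 0\<^sub>v n"
  then have "c $ j = 0" if "j < n * s" for j
    using coeff_poly_vec_of_blocks[OF that, of c] that by (cases n) auto
  then show "c = 0\<^sub>v (n * s)"
    using assms by (intro eq_vecI) auto
qed (auto simp: poly_vec_of_blocks_def block_index_less intro!: eq_vecI sum.neutral)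

definition is_monic_mat_poly :: "nat \<Rightarrow> 'a::comm_ring_1 poly mat \<Rightarrow> bool" where
  "is_monic_mat_poly s L \<longleftrightarrow> (\<forall>i<dim_row L. \<forall>j<dim_col L.
     if i = j then degree (L $$ (i, j)) = s \<and> lead_coeff (L $$ (i, j)) = 1 else degree (L $$ (i, j)) < s)"

lemma degree_monom_1_minus_lower:
  fixes q :: "'a::comm_ring_1 poly"
  assumes "degree q < s"
  shows "degree (monom 1 s - q) = s" "lead_coeff (monom 1 s - q) = 1"
proof -
  have coeff: "coeff (monom 1 s - q) s = 1"
    using assms by (simp add: coeff_eq_0)
  moreover have "degree (monom 1 s - q) \<le> s"
    using assms by (intro degree_diff_le) (simp_all add: degree_monom_le)
  ultimately show "degree (monom 1 s - q) = s"
    by (metis le_antisym le_degree one_neq_zero)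
  with coeff show "lead_coeff (monom 1 s - q) = 1"
    by simp
qed

lemma is_monic_mat_poly_monic_mat_poly:
  fixes D :: "nat \<Rightarrow> 'a::field mat"
  assumes "s \<ge> 1"
  shows "is_monic_mat_poly s (monic_mat_poly n s D)"
proof -
  have low: "degree (\<Sum>k<s. monom (D k $$ (i, j)) k) < s" for i j
    using assms by (intro degree_sum_less) (simp_all add: order.strict_trans1[OF degree_monom_le])
  then show ?thesis
    unfolding is_monic_mat_poly_def monic_mat_poly_def by (simp add: degree_monom_1_minus_lower coeff_eq_0)
qed

lemma is_monic_mat_polyD:
  assumes "is_monic_mat_poly s L" "L \<in> carrier_mat n n" "i < n" "j < n"
  shows "degree (L $$ (i, i)) = s" "lead_coeff (L $$ (i, i)) = 1"
    and "i \<noteq> j \<Longrightarrow> degree (L $$ (i, j)) < s" "degree (L $$ (i, j)) \<le> s"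
  using assms unfolding is_monic_mat_poly_def by (auto split: if_splits) (metis less_imp_le_nat order_refl)

lemma degree_det_term_le:
  assumes L: "L \<in> carrier_mat n n" "is_monic_mat_poly s L" and p: "p permutes {0..<n}"
  shows "degree (\<Prod>i = 0..<n. L $$ (i, p i)) \<le> n * s"
    and "p \<noteq> id \<Longrightarrow> degree (\<Prod>i = 0..<n. L $$ (i, p i)) < n * s"
proof -
  have pn: "p i < n" if "i < n" for i
    using p that permutes_in_image by fastforce
  have sum: "degree (\<Prod>i = 0..<n. L $$ (i, p i)) \<le> (\<Sum>i = 0..<n. degree (L $$ (i, p i)))"
    using degree_prod_sum_le[of "{0..<n}" "\<lambda>i. L $$ (i, p i)"] by (simp add: o_def)
  also have "\<dots> \<le> (\<Sum>i = 0..<n. s)"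
    using is_monic_mat_polyD(4)[OF L(2,1)] pn by (intro sum_mono) simp
  finally show "degree (\<Prod>i = 0..<n. L $$ (i, p i)) \<le> n * s"
    by simp
  assume "p \<noteq> id"
  then obtain i0 where i0: "p i0 \<noteq> i0"
    by (auto simp: fun_eq_iff)
  then have "i0 < n"
    using p by (meson atLeastLessThan_iff permutes_not_in zero_le)
  then have "(\<Sum>i = 0..<n. degree (L $$ (i, p i))) < (\<Sum>i = 0..<n. s)"
    using is_monic_mat_polyD(3,4)[OF L(2,1)] pn i0
    by (intro sum_strict_mono_ex1) (auto intro!: bexI[of _ i0])
  with sum show "degree (\<Prod>i = 0..<n. L $$ (i, p i)) < n * s"
    by simp
qed

lemma is_monic_mat_poly_det:
  fixes L :: "'a::idom poly mat"
  assumes L: "L \<in> carrier_mat n n" "is_monic_mat_poly s L"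
  shows "degree (det L) = n * s" "lead_coeff (det L) = 1"
proof -
  let ?t = "\<lambda>p. \<Prod>i = 0..<n. L $$ (i, p i)"
  define R where "R = (\<Sum>p \<in> {p. p permutes {0..<n}} - {id}. signof p * ?t p)"
  have det: "det L = ?t id + R"
    unfolding det_def'[OF L(1)] R_def
    by (subst sum.remove[of _ id]) (simp_all add: finite_permutations permutes_id sign_id)
  have "coeff (signof p * ?t p) (n * s) = 0" if "p permutes {0..<n}" "p \<noteq> id" for p
    using degree_det_term_le(2)[OF L that] by (simp add: of_int_poly coeff_eq_0)
  then have R_coeff: "coeff R (n * s) = 0"
    unfolding R_def coeff_sum by (intro sum.neutral) simp
  have "degree (signof p * ?t p) \<le> n * s" if "p permutes {0..<n}" for p
    using degree_det_term_le(1)[OF L that] degree_mult_le[of "signof p" "?t p"] by simp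
  then have R_degree: "degree R \<le> n * s"
    unfolding R_def by (intro degree_sum_le) (simp_all add: finite_permutations)
  have diag: "degree (L $$ (i, i)) = s" "coeff (L $$ (i, i)) s = 1" "L $$ (i, i) \<noteq> 0"
    if "i < n" for i
    using is_monic_mat_polyD(1,2)[OF L(2,1) that that] by auto
  have t_degree: "degree (?t id) = n * s"
    by (simp add: degree_prod_eq_sum_degree diag)
  have t_lead: "lead_coeff (?t id) = 1"
    by (simp add: lead_coeff_prod diag)
  have "coeff (det L) (n * s) = 1"
    using t_degree t_lead R_coeff by (simp add: det)
  moreover have "degree (det L) \<le> n * s"
    unfolding det using t_degree R_degree by (intro degree_add_le) simp_all
  ultimately show "degree (det L) = n * s"
    by (metis le_antisym le_degree one_neq_zero)
  with \<open>coeff (det L) (n * s) = 1\<close> show "lead_coeff (det L) = 1"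
    by simp
qed

lemma is_monic_mat_poly_mult_vec_low_degree:
  fixes L :: "'a::idom poly mat"
  assumes L: "L \<in> carrier_mat n n" "is_monic_mat_poly s L" and w: "w \<in> carrier_vec n"
    and low: "\<And>i. i < n \<Longrightarrow> degree ((L *\<^sub>v w) $ i) < s"
  shows "w = 0\<^sub>v n"
proof (rule ccontr)
  \<comment> \<open>If w_i0 has the largest degree d, the coefficient of x^(s+d) in (L w)_i0 is the
    leading coefficient of w_i0.\<close>
  let ?J = "{j. j < n \<and> w $ j \<noteq> 0}"
  assume "w \<noteq> 0\<^sub>v n"
  then have "?J \<noteq> {}"
    using w by (auto simp: vec_eq_iff)
  define d where "d = Max ((\<lambda>j. degree (w $ j)) ` ?J)"
  have d_max: "degree (w $ j) \<le> d" if "j < n" "w $ j \<noteq> 0" for j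
    unfolding d_def using that by (intro Max_ge) auto
  have "d \<in> (\<lambda>j. degree (w $ j)) ` ?J"
    unfolding d_def using \<open>?J \<noteq> {}\<close> by (intro Max_in) auto
  then obtain i0 where i0: "i0 < n" "w $ i0 \<noteq> 0" "degree (w $ i0) = d"
    by auto
  have entry: "coeff (L $$ (i0, j) * w $ j) (s + d) = (if j = i0 then lead_coeff (w $ i0) else 0)"
    if "j < n" for j
  proof (cases "j = i0 \<or> w $ j = 0")
    case True
    then show ?thesis
      using coeff_mult_degree_sum[of "L $$ (i0, i0)" "w $ i0"]
        is_monic_mat_polyD(1,2)[OF L(2,1) i0(1) i0(1)] i0
      by auto
  next
    case False
    have "degree (L $$ (i0, j) * w $ j) < s + d"
      using degree_mult_le[of "L $$ (i0, j)" "w $ j"] is_monic_mat_polyD(3)[OF L(2,1) i0(1) that]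
        d_max[OF that] False by linarith
    then show ?thesis
      using False by (simp add: coeff_eq_0)
  qed
  have "coeff ((L *\<^sub>v w) $ i0) (s + d) = lead_coeff (w $ i0)"
    using L(1) w i0(1) by (simp add: scalar_prod_def coeff_sum entry)
  then have "s + d \<le> degree ((L *\<^sub>v w) $ i0)"
    using i0(2) by (intro le_degree) simp
  then show False
    using low[OF i0(1)] by simp
qed

lemma degree_det_right_associate_monic:
  fixes A U :: "'a::field poly mat"
  assumes A: "A \<in> carrier_mat n n" and U: "U \<in> carrier_mat n n" "invertible_mat U"
    and monic: "is_monic_mat_poly s (A * U)"
  shows "degree (det A) = n * s"
proof -
  have AU: "A * U \<in> carrier_mat n n"
    using A U by simp
  have "det (A * U) = det A * det U"
    using A U by (simp add: det_mult)
  moreover have "degree (det (A * U)) = n * s" "det (A * U) \<noteq> 0"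
    using is_monic_mat_poly_det[OF AU monic] by auto
  moreover have "det U \<noteq> 0" "degree (det U) = 0"
    using U by (simp_all add: invertible_poly_mat_iff_det)
  ultimately show ?thesis
    by (simp add: degree_mult_eq)
qed

lemma blocks_eq_0_if_in_range_right_associate_monic:
  fixes A U :: "'a::field poly mat"
  assumes A: "A \<in> carrier_mat n n" and U: "U \<in> carrier_mat n n" "invertible_mat U"
    and monic: "is_monic_mat_poly s (A * U)" and s: "s \<ge> 1"
    and c: "c \<in> carrier_vec (n * s)"
    and range: "u \<in> carrier_vec n" "poly_vec_of_blocks n s c = A *\<^sub>v u"
  shows "c = 0\<^sub>v (n * s)"
proof -
  obtain U' where U': "U' \<in> carrier_mat n n" "U * U' = 1\<^sub>m n"
    using invertible_matE[OF U] by blast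
  have AU: "A * U \<in> carrier_mat n n"
    using A U by simp
  have "(A * U) *\<^sub>v (U' *\<^sub>v u) = A *\<^sub>v ((U * U') *\<^sub>v u)"
    using A U(1) U'(1) range(1) by simp
  also have "\<dots> = poly_vec_of_blocks n s c"
    using U'(2) range by simp
  finally have L: "poly_vec_of_blocks n s c = (A * U) *\<^sub>v (U' *\<^sub>v u)" ..
  have "U' *\<^sub>v u = 0\<^sub>v n"
    using U'(1) range(1) degree_poly_vec_of_blocks[OF s] L[symmetric]
    by (intro is_monic_mat_poly_mult_vec_low_degree[OF AU monic]) auto
  then have "poly_vec_of_blocks n s c = (A * U) *\<^sub>v 0\<^sub>v n"
    using L by simp
  also have "\<dots> = 0\<^sub>v n"
    using AU by (intro eq_vecI) (auto simp: scalar_prod_def)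
  finally have "poly_vec_of_blocks n s c = 0\<^sub>v n" .
  then show ?thesis
    using poly_vec_of_blocks_eq_0_iff[OF c] by simp
qed

lemma col_monic_mat_poly:
  assumes "i < n"
  shows "col (monic_mat_poly n s (\<lambda>k. mat n n (\<lambda>(r, j). c j $ (k * n + r)))) i
    = monom 1 s \<cdot>\<^sub>v unit_vec n i - poly_vec_of_blocks n s (c i)"
  using assms by (intro eq_vecI) (simp_all add: monic_mat_poly_def poly_vec_of_blocks_def)

lemma right_associate_monic_if_columns_in_range:
  fixes A :: "'a::field poly mat"
  assumes A: "A \<in> carrier_mat n n" "degree (det A) = n * s" and s: "s \<ge> 1"
    and cols: "\<And>i. i < n \<Longrightarrow> \<exists>c\<in>carrier_vec (n * s). \<exists>u\<in>carrier_vec n.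
      monom 1 s \<cdot>\<^sub>v unit_vec n i - poly_vec_of_blocks n s c = A *\<^sub>v u"
  shows "\<exists>U D. U \<in> carrier_mat n n \<and> invertible_mat U \<and> (\<forall>k<s. D k \<in> carrier_mat n n)
    \<and> A * U = monic_mat_poly n s D"
proof -
  obtain c u where cu: "\<And>i. i < n \<Longrightarrow> u i \<in> carrier_vec n \<and>
      monom 1 s \<cdot>\<^sub>v unit_vec n i - poly_vec_of_blocks n s (c i) = A *\<^sub>v u i"
    using cols by metis
  define D where "D k = mat n n (\<lambda>(r, j). c j $ (k * n + r))" for k
  define U where "U = mat n n (\<lambda>(r, j). u j $ r)"
  have U_carrier: "U \<in> carrier_mat n n"
    by (simp add: U_def)
  have col_U: "col U j = u j" if "j < n" for j
    using cu[OF that] that by (auto simp: U_def intro!: eq_vecI)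
  have "col (A * U) j = col (monic_mat_poly n s D) j" if "j < n" for j
  proof -
    have "col (A * U) j = A *\<^sub>v u j"
      using col_mult2[OF A(1) U_carrier that] col_U[OF that] by simp
    also have "\<dots> = monom 1 s \<cdot>\<^sub>v unit_vec n j - poly_vec_of_blocks n s (c j)"
      using cu[OF that] by simp
    also have "\<dots> = col (monic_mat_poly n s D) j"
      unfolding D_def by (rule col_monic_mat_poly[OF that, symmetric])
    finally show ?thesis .
  qed
  then have AU: "A * U = monic_mat_poly n s D"
    using A(1) U_carrier by (intro mat_col_eqI) (simp_all add: monic_mat_poly_def)
  have L: "monic_mat_poly n s D \<in> carrier_mat n n"
    by (simp add: monic_mat_poly_def)
  note det_L = is_monic_mat_poly_det[OF L is_monic_mat_poly_monic_mat_poly[OF s]]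
  have "det (A * U) = det A * det U"
    using A(1) U_carrier by (simp add: det_mult)
  moreover have "degree (det (A * U)) = n * s" "det (A * U) \<noteq> 0"
    using det_L AU by auto
  ultimately have "det U \<noteq> 0" "degree (det U) = 0"
    using A(2) by (auto simp: degree_mult_eq)
  then have "invertible_mat U"
    using U_carrier by (simp add: invertible_poly_mat_iff_det)
  then show ?thesis
    using U_carrier AU by (intro exI[of _ U] exI[of _ D]) (simp add: D_def)
qed

lemma root_list_spec:
  fixes \<phi> :: "'a::field poly"
  assumes "\<phi> \<noteq> 0"
  shows "distinct (root_list \<phi>)" "set (root_list \<phi>) = {\<alpha>. poly \<phi> \<alpha> = 0}"
proof -
  have "\<exists>xs. distinct xs \<and> set xs = {\<alpha>. poly \<phi> \<alpha> = 0}"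
    using finite_distinct_list[OF poly_roots_finite[OF assms]] by metis
  then show "distinct (root_list \<phi>)" "set (root_list \<phi>) = {\<alpha>. poly \<phi> \<alpha> = 0}"
    unfolding root_list_def by (metis (mono_tags, lifting) someI_ex)+
qed

text \<open>The node (i, alpha, k) stands for the row g_i^(k)(alpha) of M_G(Phi), in the order of M_mat.\<close>

definition hermite_nodes :: "(nat \<Rightarrow> 'a::field poly) \<Rightarrow> nat \<Rightarrow> (nat \<times> 'a \<times> nat) list" where
  "hermite_nodes \<phi> n = concat (map (\<lambda>i. concat (map (\<lambda>\<alpha>. map (\<lambda>k. (i, \<alpha>, k)) [0..<order \<alpha> (\<phi> i)])
     (root_list (\<phi> i)))) [0..<n])"

definition hermite_data :: "(nat \<Rightarrow> 'a::field poly) \<Rightarrow> 'a poly vec \<Rightarrow> 'a vec" where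
  "hermite_data \<phi> v = vec_of_list (map (\<lambda>(i, \<alpha>, k). poly ((pderiv ^^ k) (v $ i)) \<alpha>)
     (hermite_nodes \<phi> (dim_vec v)))"

lemma set_hermite_nodes:
  assumes "\<And>i. i < n \<Longrightarrow> \<phi> i \<noteq> 0"
  shows "set (hermite_nodes \<phi> n) = {(i, \<alpha>, k). i < n \<and> k < order \<alpha> (\<phi> i)}"
  using assms root_list_spec(2) by (fastforce simp: hermite_nodes_def order_root)

lemma length_hermite_nodes:
  fixes \<phi> :: "nat \<Rightarrow> 'a::alg_closed_field poly"
  assumes "\<And>i. i < n \<Longrightarrow> \<phi> i \<noteq> 0"
  shows "length (hermite_nodes \<phi> n) = (\<Sum>i<n. degree (\<phi> i))"
proof -
  have "(\<Sum>\<alpha>\<leftarrow>root_list (\<phi> i). order \<alpha> (\<phi> i)) = degree (\<phi> i)" if "i < n" for i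
  proof -
    have "(\<Sum>\<alpha>\<leftarrow>root_list (\<phi> i). order \<alpha> (\<phi> i)) = (\<Sum>\<alpha>\<in>set_mset (proots (\<phi> i)). count (proots (\<phi> i)) \<alpha>)"
      using assms[OF that] root_list_spec[OF assms[OF that]] by (simp add: sum_list_distinct_conv_sum_set)
    also have "\<dots> = degree (\<phi> i)"
      by (simp add: size_multiset_overloaded_eq[symmetric] size_proots_alg_closed)
    finally show ?thesis .
  qed
  then show ?thesis
    by (simp add: hermite_nodes_def length_concat o_def sum_list_sum_nth atLeast0LessThan)
qed

lemma dim_hermite_data:
  fixes \<phi> :: "nat \<Rightarrow> 'a::alg_closed_field poly"
  assumes "\<And>i. i < dim_vec v \<Longrightarrow> \<phi> i \<noteq> 0"
  shows "dim_vec (hermite_data \<phi> v) = (\<Sum>i<dim_vec v. degree (\<phi> i))"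
  using assms by (simp add: hermite_data_def length_hermite_nodes)

lemma hermite_data_diff:
  assumes "dim_vec w = dim_vec v"
  shows "hermite_data \<phi> (v - w) = hermite_data \<phi> v - hermite_data \<phi> w"
proof (rule eq_vecI)
  fix r
  assume "r < dim_vec (hermite_data \<phi> v - hermite_data \<phi> w)"
  then have r: "r < length (hermite_nodes \<phi> (dim_vec v))"
    using assms by (simp add: hermite_data_def)
  obtain i \<alpha> k where node: "hermite_nodes \<phi> (dim_vec v) ! r = (i, \<alpha>, k)"
    by (metis prod_cases3)
  then have "i < dim_vec v"
    using nth_mem[OF r] by (auto simp: hermite_nodes_def)
  then show "hermite_data \<phi> (v - w) $ r = (hermite_data \<phi> v - hermite_data \<phi> w) $ r"
    using assms r node by (simp add: hermite_data_def vec_of_list_index higher_pderiv_diff)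
qed (simp add: hermite_data_def assms)

lemma hermite_data_eq_0_iff:
  fixes \<phi> :: "nat \<Rightarrow> 'a::{alg_closed_field, field_char_0} poly"
  assumes "\<And>i. i < dim_vec v \<Longrightarrow> \<phi> i \<noteq> 0"
  shows "hermite_data \<phi> v = 0\<^sub>v (dim_vec (hermite_data \<phi> v)) \<longleftrightarrow> (\<forall>i<dim_vec v. \<phi> i dvd v $ i)"
proof -
  have "hermite_data \<phi> v = 0\<^sub>v (dim_vec (hermite_data \<phi> v)) \<longleftrightarrow>
      (\<forall>(i, \<alpha>, k) \<in> set (hermite_nodes \<phi> (dim_vec v)). poly ((pderiv ^^ k) (v $ i)) \<alpha> = 0)"
    by (auto simp: hermite_data_def vec_eq_iff all_set_conv_all_nth vec_of_list_index split: prod.splits)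
  also have "\<dots> \<longleftrightarrow> (\<forall>i<dim_vec v. \<forall>\<alpha> k. k < order \<alpha> (\<phi> i) \<longrightarrow> poly ((pderiv ^^ k) (v $ i)) \<alpha> = 0)"
    using assms by (auto simp: set_hermite_nodes)
  also have "\<dots> \<longleftrightarrow> (\<forall>i<dim_vec v. \<phi> i dvd v $ i)"
    using assms by (simp add: dvd_iff_higher_pderiv_vanish)
  finally show ?thesis .
qed

lemma M_mat_eq_mat_of_rows:
  "M_mat G \<phi> = mat_of_rows (dim_col G)
     (map (\<lambda>(i, \<alpha>, k). vec (dim_col G) (\<lambda>j. poly ((pderiv ^^ k) (G $$ (i, j))) \<alpha>))
       (hermite_nodes \<phi> (dim_row G)))"
proof -
  have "M_rows (row G i) (\<phi> i)
      = map (\<lambda>(i, \<alpha>, k). vec (dim_col G) (\<lambda>j. poly ((pderiv ^^ k) (G $$ (i, j))) \<alpha>))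
      (concat (map (\<lambda>\<alpha>. map (\<lambda>k. (i, \<alpha>, k)) [0..<order \<alpha> (\<phi> i)]) (root_list (\<phi> i))))"
    if "i < dim_row G" for i
    using that by (auto simp: M_rows_def map_concat o_def intro!: arg_cong[where f = concat] eq_vecI)
  then show ?thesis
    unfolding M_mat_def hermite_nodes_def map_concat map_map
    by (intro arg_cong[where f = "mat_of_rows (dim_col G)"] arg_cong[where f = concat] map_cong)
      (simp_all add: map_concat)
qed

lemma M_mat_mult_vec:
  fixes G :: "'a::field poly mat"
  assumes G: "G \<in> carrier_mat n m" and c: "c \<in> carrier_vec m"
  shows "M_mat G \<phi> *\<^sub>v c = hermite_data \<phi> (G *\<^sub>v map_vec (\<lambda>a. [:a:]) c)"
proof (rule eq_vecI)
  fix r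
  assume "r < dim_vec (hermite_data \<phi> (G *\<^sub>v map_vec (\<lambda>a. [:a:]) c))"
  then have r: "r < length (hermite_nodes \<phi> n)"
    using G by (simp add: hermite_data_def)
  obtain i \<alpha> k where node: "hermite_nodes \<phi> n ! r = (i, \<alpha>, k)"
    by (metis prod_cases3)
  then have i: "i < n"
    using nth_mem[OF r] by (auto simp: hermite_nodes_def)
  have "(G *\<^sub>v map_vec (\<lambda>a. [:a:]) c) $ i = (\<Sum>j = 0..<m. smult (c $ j) (G $$ (i, j)))"
    using G c i by (auto simp: scalar_prod_def intro!: sum.cong)
  then show "(M_mat G \<phi> *\<^sub>v c) $ r = hermite_data \<phi> (G *\<^sub>v map_vec (\<lambda>a. [:a:]) c) $ r"
    using G c r node
    by (simp add: M_mat_eq_mat_of_rows hermite_data_def vec_of_list_index mat_of_rows_def scalar_prod_def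
        higher_pderiv_sum higher_pderiv_smult poly_sum mult.commute)
qed (use G in \<open>simp add: M_mat_eq_mat_of_rows hermite_data_def\<close>)

lemma M_mat_block_row_powers_mult_vec:
  fixes P :: "'a::field poly mat"
  assumes P: "P \<in> carrier_mat n n" and c: "c \<in> carrier_vec (n * s)"
  shows "M_mat (P * block_row_powers n s) \<phi> *\<^sub>v c = hermite_data \<phi> (P *\<^sub>v poly_vec_of_blocks n s c)"
proof -
  have B: "block_row_powers n s \<in> carrier_mat n (n * s)"
    by (simp add: block_row_powers_def)
  have "M_mat (P * block_row_powers n s) \<phi> *\<^sub>v c
      = hermite_data \<phi> ((P * block_row_powers n s) *\<^sub>v map_vec (\<lambda>a. [:a:]) c)"
    using M_mat_mult_vec[OF mult_carrier_mat[OF P B] c] .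
  also have "\<dots> = hermite_data \<phi> (P *\<^sub>v poly_vec_of_blocks n s c)"
    using assoc_mult_mat_vec[OF P B, of "map_vec (\<lambda>a. [:a:]) c"] c by (simp add: block_row_powers_mult_vec)
  finally show ?thesis .
qed

locale smith_form =
  fixes A P Q :: "'a::{alg_closed_field, field_char_0} poly mat"
    and \<phi> :: "nat \<Rightarrow> 'a poly"
    and n :: nat
  assumes A: "A \<in> carrier_mat n n"
    and P: "P \<in> carrier_mat n n" "invertible_mat P"
    and Q: "Q \<in> carrier_mat n n" "invertible_mat Q"
    and smith: "P * A * Q = diag_poly_mat n \<phi>"
    and \<phi>_nonzero: "\<And>i. i < n \<Longrightarrow> \<phi> i \<noteq> 0"
begin

lemma degree_det: "degree (det A) = (\<Sum>i<n. degree (\<phi> i))"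
proof -
  have prod: "det P * det A * det Q = (\<Prod>i<n. \<phi> i)"
    using arg_cong[OF smith, of det] A P(1) Q(1) by (simp add: det_mult det_diag_poly_mat mult.assoc)
  have units: "det P \<noteq> 0" "degree (det P) = 0" "det Q \<noteq> 0" "degree (det Q) = 0"
    using P Q by (simp_all add: invertible_poly_mat_iff_det)
  have "(\<Prod>i<n. \<phi> i) \<noteq> 0"
    using \<phi>_nonzero by simp
  then have "det A \<noteq> 0"
    using prod by auto
  then have "degree (det A) = degree (det P * det A * det Q)"
    using units by (simp add: degree_mult_eq)
  also have "\<dots> = (\<Sum>i<n. degree (\<phi> i))"
    using \<phi>_nonzero by (simp add: prod degree_prod_eq_sum_degree)
  finally show ?thesis .
qed

lemma hermite_data_carrier:
  assumes "v \<in> carrier_vec n"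
  shows "hermite_data \<phi> (P *\<^sub>v v) \<in> carrier_vec (degree (det A))"
proof -
  have "dim_vec (hermite_data \<phi> (P *\<^sub>v v)) = (\<Sum>i<n. degree (\<phi> i))"
    using dim_hermite_data[of "P *\<^sub>v v" \<phi>] P(1) \<phi>_nonzero by simp
  then show ?thesis
    by (intro carrier_vecI) (simp add: degree_det)
qed

lemma range_iff_hermite_data_eq_0:
  assumes v: "v \<in> carrier_vec n"
  shows "(\<exists>u\<in>carrier_vec n. v = A *\<^sub>v u) \<longleftrightarrow> hermite_data \<phi> (P *\<^sub>v v) = 0\<^sub>v (degree (det A))"
proof -
  have "(\<exists>u\<in>carrier_vec n. v = A *\<^sub>v u) \<longleftrightarrow> (\<exists>w\<in>carrier_vec n. P *\<^sub>v v = diag_poly_mat n \<phi> *\<^sub>v w)"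
    using range_mult_vec_equivalent_iff[OF A P Q v] smith by simp
  also have "\<dots> \<longleftrightarrow> (\<forall>i<n. \<phi> i dvd (P *\<^sub>v v) $ i)"
    using P(1) v by (intro range_diag_poly_mat_iff) simp
  also have "\<dots> \<longleftrightarrow> hermite_data \<phi> (P *\<^sub>v v) = 0\<^sub>v (degree (det A))"
    using hermite_data_eq_0_iff[of "P *\<^sub>v v" \<phi>] hermite_data_carrier[OF v] P(1) \<phi>_nonzero
    by (simp del: index_mult_mat_vec)
  finally show ?thesis .
qed

lemma M_mat_carrier: "M_mat (P * block_row_powers n s) \<phi> \<in> carrier_mat (degree (det A)) (n * s)"
  using length_hermite_nodes[of n \<phi>] \<phi>_nonzero P(1) unfolding M_mat_eq_mat_of_rows
  by (intro carrier_matI) (simp_all add: degree_det block_row_powers_def)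

lemma det_M_mat_nonzero_if_right_associate_monic:
  assumes s: "s \<ge> 1" and U: "U \<in> carrier_mat n n" "invertible_mat U"
    and monic: "is_monic_mat_poly s (A * U)"
  shows "det (M_mat (P * block_row_powers n s) \<phi>) \<noteq> 0"
proof -
  let ?M = "M_mat (P * block_row_powers n s) \<phi>"
  have deg: "degree (det A) = n * s"
    using degree_det_right_associate_monic[OF A U monic] .
  have "c = 0\<^sub>v (n * s)" if c: "c \<in> carrier_vec (n * s)" and Mc: "?M *\<^sub>v c = 0\<^sub>v (n * s)" for c
  proof -
    have "\<exists>u\<in>carrier_vec n. poly_vec_of_blocks n s c = A *\<^sub>v u"
      using range_iff_hermite_data_eq_0[of "poly_vec_of_blocks n s c"] Mc deg
        M_mat_block_row_powers_mult_vec[OF P(1) c] by (simp add: poly_vec_of_blocks_def)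
    then show ?thesis
      using blocks_eq_0_if_in_range_right_associate_monic[OF A U monic s c] by blast
  qed
  moreover have "?M \<in> carrier_mat (n * s) (n * s)"
    using M_mat_carrier[of s] deg by simp
  ultimately show ?thesis
    using det_0_iff_vec_prod_zero_field[of ?M "n * s"] by blast
qed

lemma exists_low_degree_representative:
  assumes deg: "degree (det A) = n * s" and det_M: "det (M_mat (P * block_row_powers n s) \<phi>) \<noteq> 0"
    and v: "v \<in> carrier_vec n"
  shows "\<exists>c\<in>carrier_vec (n * s). \<exists>u\<in>carrier_vec n. v - poly_vec_of_blocks n s c = A *\<^sub>v u"
proof -
  let ?M = "M_mat (P * block_row_powers n s) \<phi>"
  let ?h = "\<lambda>w. hermite_data \<phi> (P *\<^sub>v w)"
  have M: "?M \<in> carrier_mat (n * s) (n * s)"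
    using M_mat_carrier[of s] deg by simp
  obtain M' where M': "M' \<in> carrier_mat (n * s) (n * s)" "?M * M' = 1\<^sub>m (n * s)"
    using det_non_zero_imp_unit[OF M det_M] by (auto simp: Units_def ring_mat_def)
  have hv: "?h v \<in> carrier_vec (n * s)"
    using hermite_data_carrier[OF v] deg by simp
  define c where "c = M' *\<^sub>v ?h v"
  have c: "c \<in> carrier_vec (n * s)"
    using M'(1) hv by (simp add: c_def)
  have blocks: "poly_vec_of_blocks n s c \<in> carrier_vec n"
    by (simp add: poly_vec_of_blocks_def)
  have "?h (poly_vec_of_blocks n s c) = ?M *\<^sub>v c"
    using M_mat_block_row_powers_mult_vec[OF P(1) c] ..
  also have "\<dots> = (?M * M') *\<^sub>v ?h v"
    using M M'(1) hv by (simp add: c_def)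
  also have "\<dots> = ?h v"
    using M'(2) hv by simp
  finally have "?h (v - poly_vec_of_blocks n s c) = ?h v - ?h v"
    using P(1) v blocks by (simp add: mult_minus_distrib_mat_vec hermite_data_diff)
  also have "\<dots> = 0\<^sub>v (degree (det A))"
    using hv deg by simp
  finally have "\<exists>u\<in>carrier_vec n. v - poly_vec_of_blocks n s c = A *\<^sub>v u"
    using range_iff_hermite_data_eq_0[of "v - poly_vec_of_blocks n s c"] v blocks by simp
  then show ?thesis
    using c by blast
qed

end

theorem theorem5p12:
  fixes A P Q :: "'a::{alg_closed_field, field_char_0} poly mat"
    and \<phi> :: "nat \<Rightarrow> 'a poly"
    and n s :: nat
  assumes A: "A \<in> carrier_mat n n" and nonsing: "det A \<noteq> 0"
    and P: "P \<in> carrier_mat n n" "invertible_mat P"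
    and Q: "Q \<in> carrier_mat n n" "invertible_mat Q"
    and monic: "\<And>i. i < n \<Longrightarrow> lead_coeff (\<phi> i) = 1"
    and divides: "\<And>i. Suc i < n \<Longrightarrow> \<phi> i dvd \<phi> (Suc i)"
    and smith: "P * A * Q = diag_poly_mat n \<phi>"
    and s: "s \<ge> 1"
  shows "(\<exists>U D. U \<in> carrier_mat n n \<and> invertible_mat U \<and> (\<forall>k<s. D k \<in> carrier_mat n n)
              \<and> A * U = monic_mat_poly n s D)
         \<longleftrightarrow> (degree (det A) = n * s \<and> det (M_mat (P * block_row_powers n s) \<phi>) \<noteq> 0)"
proof -
  interpret smith_form A P Q \<phi> n
    using A P Q smith by unfold_locales (auto dest: monic)
  show ?thesis
  proof
    assume "\<exists>U D. U \<in> carrier_mat n n \<and> invertible_mat U \<and> (\<forall>k<s. D k \<in> carrier_mat n n)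
      \<and> A * U = monic_mat_poly n s D"
    then obtain U where U: "U \<in> carrier_mat n n" "invertible_mat U"
      and monic_AU: "is_monic_mat_poly s (A * U)"
      using is_monic_mat_poly_monic_mat_poly[OF s] by metis
    show "degree (det A) = n * s \<and> det (M_mat (P * block_row_powers n s) \<phi>) \<noteq> 0"
      using degree_det_right_associate_monic[OF A U monic_AU]
        det_M_mat_nonzero_if_right_associate_monic[OF s U monic_AU] by simp
  next
    assume "degree (det A) = n * s \<and> det (M_mat (P * block_row_powers n s) \<phi>) \<noteq> 0"
    then show "\<exists>U D. U \<in> carrier_mat n n \<and> invertible_mat U \<and> (\<forall>k<s. D k \<in> carrier_mat n n)
      \<and> A * U = monic_mat_poly n s D"
      using right_associate_monic_if_columns_in_range[OF A _ s] exists_low_degree_representative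
      by simp
  qed
qed

end
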